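(* If a complete theory $T$ has a witness of SSOP$_1$, then $T$ has an antichain tree. More precisely, if $\langle\varphi(x,y),\langle a_\eta\rangle_{\eta\in{}^{\omega>}2}\rangle$ witnesses SSOP$_1$, then there is $\langle b_\eta\rangle_{\eta\in{}^{\omega>}2}$ such that $\langle\varphi(x,y),\langle b_\eta\rangle\rangle$ is an antichain tree.
   Context: ${}^{\omega>}2$ is the binary tree with initial-segment order $\trianglelefteq$ and concatenation $^\frown$. $\langle\varphi,\langle a_\eta\rangle\rangle$ witnesses SSOP$_1$ if for every $X\subseteq{}^{\omega>}2$, $\{\varphi(x,a_\eta):\eta\in X\}$ is consistent iff there are no $\eta,\nu\in{}^{\omega>}2$ with $\eta^\frown\langle1\rangle,\eta^\frown\langle0\rangle^\frown\nu\in X$. $\langle\varphi,\langle b_\eta\rangle\rangle$ is an antichain tree if for every $X\subseteq{}^{\omega>}2$, $\{\varphi(x,b_\eta):\eta\in X\}$ is consistent iff the elements of $X$ are pairwise $\trianglelefteq$-incomparable. *)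

theory Defs
  imports Main "HOL-Library.Sublist"
begin

(* Model-theoretic setting: we work inside a (monster) model whose universe of
   x-tuples is the type 'a and of y-tuples is the type 'b; the formula
   phi(x,y) is interpreted as its satisfaction relation phi :: 'a => 'b => bool.
   The tree  ^{omega>}2  is  bool list  (False = 0, True = 1), with
   initial-segment order = prefix and concatenation = @. *)

(* {phi(x,b) : b in B} is consistent (with the elementary diagram of the model),
   i.e. by compactness: every finite subset is realised in the model. *)
definition consistent_inst :: "('a \<Rightarrow> 'b \<Rightarrow> bool) \<Rightarrow> 'b set \<Rightarrow> bool" where
  "consistent_inst phi B \<longleftrightarrow>
     (\<forall>F. finite F \<and> F \<subseteq> B \<longrightarrow> (\<exists>x. \<forall>b\<in>F. phi x b))"

definition ssop1_witness :: "('a \<Rightarrow> 'b \<Rightarrow> bool) \<Rightarrow> (bool list \<Rightarrow> 'b) \<Rightarrow> bool" where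
  "ssop1_witness phi a \<longleftrightarrow>
     (\<forall>X. consistent_inst phi (a ` X) \<longleftrightarrow>
          \<not> (\<exists>\<eta> \<nu>. \<eta> @ [True] \<in> X \<and> \<eta> @ [False] @ \<nu> \<in> X))"

definition antichain_tree :: "('a \<Rightarrow> 'b \<Rightarrow> bool) \<Rightarrow> (bool list \<Rightarrow> 'b) \<Rightarrow> bool" where
  "antichain_tree phi b \<longleftrightarrow>
     (\<forall>X. consistent_inst phi (b ` X) \<longleftrightarrow>
          (\<forall>\<eta>\<in>X. \<forall>\<nu>\<in>X. \<eta> \<noteq> \<nu> \<longrightarrow> \<not> prefix \<eta> \<nu> \<and> \<not> prefix \<nu> \<eta>))"

end

theory Submission
  imports Defs
begin

text \<open>Encode a node m = (m_1, ..., m_n) of the tree as 0 m_1 0 m_2 ... 0 m_n 1.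
  Two codes form the SSOP_1 configuration \<eta>1, \<eta>0\<nu> exactly when the first
  encodes a proper initial segment of the node encoded by the second: \<eta> must be the
  first code without its final 1, and the 0 after it forces the second code to
  continue with a further letter of its node. Hence precomposing an SSOP_1 witness
  with this encoding gives an antichain tree.\<close>

definition zero_spread :: "bool list \<Rightarrow> bool list" where
  "zero_spread m = concat (map (\<lambda>x. [False, x]) m)"

definition antichain_code :: "bool list \<Rightarrow> bool list" where
  "antichain_code m = zero_spread m @ [True]"

definition has_ssop1_pattern :: "bool list set \<Rightarrow> bool" where
  "has_ssop1_pattern X \<longleftrightarrow> (\<exists>\<eta> \<nu>. \<eta> @ [True] \<in> X \<and> \<eta> @ [False] @ \<nu> \<in> X)"

lemma prefix_zero_spread_snoc_False_iff:
  "prefix (zero_spread m @ [False]) (zero_spread m') \<longleftrightarrow> strict_prefix m m'"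
proof (induction m arbitrary: m')
  case Nil
  then show ?case by (cases m') (auto simp: zero_spread_def)
next
  case (Cons x m)
  then show ?case by (cases m') (auto simp: zero_spread_def)
qed

lemma ssop1_pattern_antichain_code_iff:
  "has_ssop1_pattern (antichain_code ` X) \<longleftrightarrow> (\<exists>m\<in>X. \<exists>m'\<in>X. strict_prefix m m')"
proof
  assume "has_ssop1_pattern (antichain_code ` X)"
  then obtain \<eta> \<nu> m m' where "m \<in> X" "m' \<in> X"
    and code_m: "\<eta> @ [True] = zero_spread m @ [True]"
    and code_m': "\<eta> @ [False] @ \<nu> = zero_spread m' @ [True]"
    by (auto simp: has_ssop1_pattern_def antichain_code_def)
  from code_m have "\<eta> = zero_spread m" by simp
  moreover have "\<nu> \<noteq> []" using code_m' by auto
  then obtain \<nu>' z where "\<nu> = \<nu>' @ [z]" by (metis rev_exhaust)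
  ultimately have "zero_spread m @ [False] @ \<nu>' = zero_spread m'"
    using code_m' by simp
  then have "prefix (zero_spread m @ [False]) (zero_spread m')"
    by (metis append_assoc prefixI)
  with \<open>m \<in> X\<close> \<open>m' \<in> X\<close> show "\<exists>m\<in>X. \<exists>m'\<in>X. strict_prefix m m'"
    using prefix_zero_spread_snoc_False_iff by blast
next
  assume "\<exists>m\<in>X. \<exists>m'\<in>X. strict_prefix m m'"
  then obtain m m' where "m \<in> X" "m' \<in> X" "strict_prefix m m'" by blast
  then obtain r where "zero_spread m' = zero_spread m @ [False] @ r"
    using prefix_zero_spread_snoc_False_iff by (auto simp: prefix_def)
  then have "antichain_code m' = zero_spread m @ [False] @ (r @ [True])"
    by (simp add: antichain_code_def)
  moreover have "antichain_code m = zero_spread m @ [True]"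
    by (simp add: antichain_code_def)
  ultimately show "has_ssop1_pattern (antichain_code ` X)"
    unfolding has_ssop1_pattern_def using \<open>m \<in> X\<close> \<open>m' \<in> X\<close> by (metis image_eqI)
qed

lemma antichain_tree_comp_antichain_code:
  assumes "ssop1_witness phi a"
  shows "antichain_tree phi (a \<circ> antichain_code)"
  unfolding antichain_tree_def
proof
  fix X :: "bool list set"
  have "consistent_inst phi (a ` antichain_code ` X)
      \<longleftrightarrow> \<not> has_ssop1_pattern (antichain_code ` X)"
    using assms unfolding ssop1_witness_def has_ssop1_pattern_def by blast
  then have "consistent_inst phi ((a \<circ> antichain_code) ` X)
      \<longleftrightarrow> \<not> has_ssop1_pattern (antichain_code ` X)"
    by (simp add: image_comp)
  also have "\<dots> \<longleftrightarrow> (\<forall>\<eta>\<in>X. \<forall>\<nu>\<in>X. \<eta> \<noteq> \<nu> \<longrightarrow> \<not> prefix \<eta> \<nu> \<and> \<not> prefix \<nu> \<eta>)"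
    by (auto simp: ssop1_pattern_antichain_code_iff strict_prefix_def)
  finally show "consistent_inst phi ((a \<circ> antichain_code) ` X)
      \<longleftrightarrow> (\<forall>\<eta>\<in>X. \<forall>\<nu>\<in>X. \<eta> \<noteq> \<nu> \<longrightarrow> \<not> prefix \<eta> \<nu> \<and> \<not> prefix \<nu> \<eta>)" .
qed

theorem proposition5p6:
  fixes phi :: "'a \<Rightarrow> 'b \<Rightarrow> bool" and a :: "bool list \<Rightarrow> 'b"
  assumes "ssop1_witness phi a"
  shows "\<exists>b :: bool list \<Rightarrow> 'b. antichain_tree phi b"
  using antichain_tree_comp_antichain_code[OF assms] by blast

end
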